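(* Let $M=(V,\delta)$ be an $n$-point metric in which all pairwise distances are distinct, and let $r:V\to\mathbb{R}^+$ be a range assignment. Let $F$ be the minimum spanning forest of $S=SDG(M,r)$ and let $H$ be a minimum-weight Hamiltonian path of $M$. Then $w(F)\le \log_{5/4} n \cdot w(H)$.
   Context: A metric $M=(V,\delta)$ is viewed as the complete weighted graph on $V$ with edge weights $\delta(u,v)$. A range assignment is a map $r:V\to\mathbb{R}^+$. The symmetric disk graph $SDG(M,r)$ is the undirected spanning subgraph of this complete graph containing the edge $(u,v)$ (with weight $\delta(u,v)$) if and only if $r(u)\ge\delta(u,v)$ and $r(v)\ge\delta(u,v)$. The minimum spanning forest of a weighted graph is a spanning forest with the same connected components and minimum total weight. The weight of a graph is the sum of its edge weights. *)

theory Defs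
  imports Complex_Main
begin

definition finite_metric :: "'a set \<Rightarrow> ('a \<Rightarrow> 'a \<Rightarrow> real) \<Rightarrow> bool" where
  "finite_metric V d \<longleftrightarrow> finite V \<and>
     (\<forall>u\<in>V. \<forall>v\<in>V. d u v \<ge> 0 \<and> (d u v = 0 \<longleftrightarrow> u = v) \<and> d u v = d v u) \<and>
     (\<forall>u\<in>V. \<forall>v\<in>V. \<forall>x\<in>V. d u x \<le> d u v + d v x)"

definition distinct_distances :: "'a set \<Rightarrow> ('a \<Rightarrow> 'a \<Rightarrow> real) \<Rightarrow> bool" where
  "distinct_distances V d \<longleftrightarrow>
     (\<forall>u\<in>V. \<forall>v\<in>V. \<forall>x\<in>V. \<forall>y\<in>V. u \<noteq> v \<longrightarrow> x \<noteq> y \<longrightarrow> {u, v} \<noteq> {x, y} \<longrightarrow> d u v \<noteq> d x y)"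

definition edge_weight :: "('a \<Rightarrow> 'a \<Rightarrow> real) \<Rightarrow> 'a set \<Rightarrow> real" where
  "edge_weight d e = (THE w. \<exists>u v. e = {u, v} \<and> w = d u v)"

definition graph_weight :: "('a \<Rightarrow> 'a \<Rightarrow> real) \<Rightarrow> 'a set set \<Rightarrow> real" where
  "graph_weight d E = (\<Sum>e\<in>E. edge_weight d e)"

definition SDG :: "'a set \<Rightarrow> ('a \<Rightarrow> 'a \<Rightarrow> real) \<Rightarrow> ('a \<Rightarrow> real) \<Rightarrow> 'a set set" where
  "SDG V d r = {{u, v} | u v. u \<in> V \<and> v \<in> V \<and> u \<noteq> v \<and> r u \<ge> d u v \<and> r v \<ge> d u v}"

definition adj :: "'a set set \<Rightarrow> ('a \<times> 'a) set" where
  "adj E = {(x, y). {x, y} \<in> E \<and> x \<noteq> y}"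

definition connected_in :: "'a set set \<Rightarrow> 'a \<Rightarrow> 'a \<Rightarrow> bool" where
  "connected_in E x y \<longleftrightarrow> (x, y) \<in> (adj E)\<^sup>*"

definition is_cycle :: "'a set set \<Rightarrow> 'a list \<Rightarrow> bool" where
  "is_cycle E cs \<longleftrightarrow> length cs \<ge> 3 \<and> distinct cs \<and>
     (\<forall>i < length cs - 1. {cs ! i, cs ! (i + 1)} \<in> E) \<and> {last cs, hd cs} \<in> E"

definition forest :: "'a set set \<Rightarrow> bool" where
  "forest F \<longleftrightarrow> \<not> (\<exists>cs. is_cycle F cs)"

definition spanning_forest :: "'a set \<Rightarrow> 'a set set \<Rightarrow> 'a set set \<Rightarrow> bool" where
  "spanning_forest V E F \<longleftrightarrow> F \<subseteq> E \<and> forest F \<and>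
     (\<forall>x\<in>V. \<forall>y\<in>V. connected_in F x y \<longleftrightarrow> connected_in E x y)"

definition min_spanning_forest :: "'a set \<Rightarrow> ('a \<Rightarrow> 'a \<Rightarrow> real) \<Rightarrow> 'a set set \<Rightarrow> 'a set set \<Rightarrow> bool" where
  "min_spanning_forest V d E F \<longleftrightarrow> spanning_forest V E F \<and>
     (\<forall>F'. spanning_forest V E F' \<longrightarrow> graph_weight d F \<le> graph_weight d F')"

definition ham_path :: "'a set \<Rightarrow> 'a list \<Rightarrow> bool" where
  "ham_path V ps \<longleftrightarrow> distinct ps \<and> set ps = V"

definition path_weight :: "('a \<Rightarrow> 'a \<Rightarrow> real) \<Rightarrow> 'a list \<Rightarrow> real" where
  "path_weight d ps = sum_list (map (\<lambda>(a, b). d a b) (zip ps (tl ps)))"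

definition min_ham_path :: "'a set \<Rightarrow> ('a \<Rightarrow> 'a \<Rightarrow> real) \<Rightarrow> 'a list \<Rightarrow> bool" where
  "min_ham_path V d H \<longleftrightarrow> ham_path V H \<and>
     (\<forall>P. ham_path V P \<longrightarrow> path_weight d H \<le> path_weight d P)"

end

theory Submission
  imports Defs "HOL-Analysis.Harmonic_Numbers"
begin

text \<open>
  Let \<open>S = SDG(M, r)\<close>, let \<open>w\<close> be the edge weight and let \<open>K\<close> be the Kruskal forest of \<open>S\<close>:
  the edges of \<open>S\<close> whose endpoints are not joined by strictly lighter edges of \<open>S\<close>.
  Since distances are distinct, \<open>K\<close> is a spanning forest of \<open>S\<close>, so \<open>w(F) \<le> w(K)\<close>.

  Fix \<open>t > 0\<close>. The edges of \<open>K\<close> of weight at least \<open>t\<close> (heavy edges) join points of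
  range at least \<open>t\<close> (tall points). Join tall points at distance \<open>< t\<close> by short edges; these
  are edges of \<open>S\<close> lighter than every heavy edge. Adding the heavy edges one at a time, in
  increasing weight, each one merges two components, so the short-edge graph has at least
  \<open>#heavy + 1\<close> components on the tall points, and representatives of distinct components
  are pairwise at distance \<open>\<ge> t\<close>. A Hamiltonian path through \<open>m\<close> points pairwise
  \<open>t\<close>-apart has weight \<open>\<ge> (m - 1) t\<close> (shortcut it with the triangle inequality), hence
  \<open>t \<cdot> #heavy(t) \<le> w(H)\<close> for every \<open>t > 0\<close>. A layer-cake argument turns these bounds into
  \<open>w(K) \<le> w(H) \<cdot> harm |K|\<close>, and \<open>harm m \<le> log\<^sub>5\<^sub>/\<^sub>4 (m + 1)\<close> with \<open>|K| + 1 \<le> n\<close>.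
\<close>

section \<open>Harmonic numbers and a layer-cake bound\<close>

text \<open>Each harmonic increment is dominated by an increment of \<open>log\<^sub>5\<^sub>/\<^sub>4\<close>; this is
  where the base \<open>5/4\<close> enters, through \<open>ln (5/4) \<le> 1/4\<close>.\<close>
lemma inverse_le_log_increment:
  fixes k :: real
  assumes k: "k \<ge> 1"
  shows "1 / k \<le> log (5/4) (k + 1) - log (5/4) k"
proof -
  have ln_base: "ln (5/4::real) \<le> 1/4"
    using ln_add_one_self_le_self[of "1/4::real"] by simp
  have "ln (k / (k + 1)) \<le> k / (k + 1) - 1"
    using k by (intro ln_le_minus_one) auto
  also have "\<dots> = - 1 / (k + 1)"
    using k by (simp add: field_simps)
  also have "ln (k / (k + 1)) = ln k - ln (k + 1)"
    using k by (simp add: ln_div)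
  finally have ln_increment: "1 / (k + 1) \<le> ln (k + 1) - ln k"
    by simp
  have "ln (5/4) / k \<le> (1/4) / k"
    using ln_base k by (intro divide_right_mono) auto
  also have "\<dots> \<le> 1 / (k + 1)"
    using k by (simp add: field_simps)
  finally have "ln (5/4) * (1 / k) \<le> ln (k + 1) - ln k"
    using ln_increment by simp
  then have "1 / k \<le> (ln (k + 1) - ln k) / ln (5/4)"
    by (simp add: field_simps)
  then show ?thesis
    by (simp add: log_def diff_divide_distrib)
qed

lemma harm_le_log: "harm n \<le> log (5/4) (real n + 1)"
proof (induction n)
  case 0
  show ?case by (simp add: harm_def)
next
  case (Suc n)
  have "harm (Suc n) = harm n + 1 / real (Suc n)"
    by (simp add: harm_Suc divide_inverse)
  also have "\<dots> \<le> log (5/4) (real n + 1)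
                   + (log (5/4) (real (Suc n) + 1) - log (5/4) (real (Suc n)))"
    using Suc.IH inverse_le_log_increment[of "real (Suc n)"] by simp
  also have "\<dots> = log (5/4) (real (Suc n) + 1)"
    by (simp add: add.commute)
  finally show ?case .
qed

definition layers_bounded :: "real \<Rightarrow> ('b \<Rightarrow> real) \<Rightarrow> 'b set \<Rightarrow> bool" where
  "layers_bounded W f A \<longleftrightarrow> (\<forall>s>0. real (card {e\<in>A. s \<le> f e}) * s \<le> W)"

lemma layers_bounded_subset:
  assumes "layers_bounded W f A" and "finite A" and "B \<subseteq> A"
  shows "layers_bounded W f B"
  unfolding layers_bounded_def
proof (intro allI impI)
  fix s :: real
  assume s: "s > 0"
  have "card {e\<in>B. s \<le> f e} \<le> card {e\<in>A. s \<le> f e}"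
    using assms(2,3) by (intro card_mono) auto
  then have "real (card {e\<in>B. s \<le> f e}) * s \<le> real (card {e\<in>A. s \<le> f e}) * s"
    using s by (intro mult_right_mono) auto
  also have "\<dots> \<le> W"
    using assms(1) s unfolding layers_bounded_def by blast
  finally show "real (card {e\<in>B. s \<le> f e}) * s \<le> W" .
qed

text \<open>Layer cake: with bounded layers the \<open>k\<close>-th largest value is at most \<open>W / k\<close>, so the
  total is at most \<open>W \<cdot> harm |A|\<close>. The induction adds the elements in decreasing order, the new
  one being the minimum, which is bounded by the layer at its own level.\<close>
lemma sum_le_harm_if_layers_bounded:
  fixes f :: "'b \<Rightarrow> real"
  assumes "finite A" and "\<forall>e\<in>A. f e > 0" and "layers_bounded W f A"
  shows "sum f A \<le> W * harm (card A)"
  using assms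
proof (induction A rule: finite_ranking_induct[where f = "\<lambda>e. - f e"])
  case empty
  show ?case by (simp add: harm_def)
next
  case (insert x A)
  show ?case
  proof (cases "x \<in> A")
    case True
    then show ?thesis using insert by (simp add: insert_absorb)
  next
    case x_new: False
    have "{e\<in>insert x A. f x \<le> f e} = insert x A"
      using insert.hyps(2) by auto
    moreover have "f x > 0" and "layers_bounded W f (insert x A)"
      using insert.prems by auto
    ultimately have "real (card (insert x A)) * f x \<le> W"
      unfolding layers_bounded_def by metis
    then have "real (Suc (card A)) * f x \<le> W"
      using x_new insert.hyps(1) by simp
    then have fx: "f x \<le> W * (1 / real (Suc (card A)))"
      by (simp add: field_simps)
    have "layers_bounded W f A"
      using insert.hyps(1) by (intro layers_bounded_subset[OF insert.prems(2)]) auto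
    then have sum_A: "sum f A \<le> W * harm (card A)"
      using insert.IH insert.prems(1) by simp
    have "sum f (insert x A) = f x + sum f A"
      using insert.hyps(1) x_new by simp
    also have "\<dots> \<le> W * (1 / real (Suc (card A))) + W * harm (card A)"
      using fx sum_A by (rule add_mono)
    also have "\<dots> = W * harm (card (insert x A))"
      using insert.hyps(1) x_new by (simp add: harm_Suc divide_inverse algebra_simps)
    finally show ?thesis .
  qed
qed

section \<open>Connectivity in edge sets\<close>

lemma sym_adj: "sym (adj E)"
  unfolding adj_def sym_def by (auto simp: insert_commute)

lemma connected_in_refl [simp]: "connected_in E x x"
  unfolding connected_in_def by simp

lemma connected_in_sym: "connected_in E x y \<Longrightarrow> connected_in E y x"
  unfolding connected_in_def by (rule symD[OF sym_rtrancl[OF sym_adj]])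

lemma connected_in_trans:
  "connected_in E x y \<Longrightarrow> connected_in E y z \<Longrightarrow> connected_in E x z"
  unfolding connected_in_def by (rule rtrancl_trans)

lemma connected_in_edge: "{x, y} \<in> E \<Longrightarrow> connected_in E x y"
proof (cases "x = y")
  case False
  assume "{x, y} \<in> E"
  then have "(x, y) \<in> adj E"
    using False unfolding adj_def by simp
  then show ?thesis
    unfolding connected_in_def by (rule r_into_rtrancl)
qed simp

lemma connected_in_subst:
  assumes "\<And>a b. {a, b} \<in> E \<Longrightarrow> connected_in E' a b"
    and "connected_in E x y"
  shows "connected_in E' x y"
proof -
  have "adj E \<subseteq> (adj E')\<^sup>*"
  proof (rule subrelI)
    fix a b
    assume "(a, b) \<in> adj E"
    then have "{a, b} \<in> E"
      unfolding adj_def by simp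
    then show "(a, b) \<in> (adj E')\<^sup>*"
      using assms(1) unfolding connected_in_def by blast
  qed
  then show ?thesis
    using assms(2) rtrancl_subset_rtrancl unfolding connected_in_def by blast
qed

lemma connected_in_mono: "E \<subseteq> E' \<Longrightarrow> connected_in E x y \<Longrightarrow> connected_in E' x y"
  by (rule connected_in_subst) (auto intro: connected_in_edge)

lemma connected_in_insert_edge:
  assumes "connected_in (insert {u, v} G) x y"
  shows "connected_in G x y \<or> connected_in G x u \<or> connected_in G x v"
proof -
  have "(x, y) \<in> (adj (insert {u, v} G))\<^sup>*"
    using assms unfolding connected_in_def .
  then show ?thesis
  proof (induction rule: rtrancl_induct)
    case base
    then show ?case by simp
  next
    case (step y z)
    from step.hyps(2) have "{y, z} \<in> G \<or> {y, z} = {u, v}"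
      unfolding adj_def by auto
    then show ?case
    proof (elim disjE)
      assume "{y, z} \<in> G"
      then have "connected_in G y z"
        by (rule connected_in_edge)
      from step.IH show ?thesis
      proof (elim disjE)
        assume "connected_in G x y"
        then show ?thesis
          using connected_in_trans[OF _ \<open>connected_in G y z\<close>] by blast
      next
        assume "connected_in G x u"
        then show ?thesis by blast
      next
        assume "connected_in G x v"
        then show ?thesis by blast
      qed
    next
      assume "{y, z} = {u, v}"
      then have "y = u \<or> y = v"
        by (auto simp: doubleton_eq_iff)
      then show ?thesis
        using step.IH by blast
    qed
  qed
qed

section \<open>Component representatives\<close>

text \<open>\<open>R\<close> contains exactly one point of every component of \<open>G\<close> that meets \<open>T\<close>;
  its size counts these components.\<close>
definition component_reps :: "'a set \<Rightarrow> 'a set set \<Rightarrow> 'a set \<Rightarrow> bool" where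
  "component_reps T G R \<longleftrightarrow> R \<subseteq> T \<and>
     (\<forall>a\<in>R. \<forall>b\<in>R. a \<noteq> b \<longrightarrow> \<not> connected_in G a b) \<and>
     (\<forall>x\<in>T. \<exists>a\<in>R. connected_in G x a)"

lemma component_reps_exist: "\<exists>R. component_reps T G R \<and> (T \<noteq> {} \<longrightarrow> R \<noteq> {})"
proof -
  define rep where "rep x = (SOME y. y \<in> T \<and> connected_in G x y)" for x
  have rep: "rep x \<in> T \<and> connected_in G x (rep x)" if "x \<in> T" for x
    unfolding rep_def by (rule someI_ex) (use that in auto)
  have rep_eq: "rep x = rep y" if "connected_in G x y" for x y
  proof -
    have "connected_in G x z \<longleftrightarrow> connected_in G y z" for z
      using connected_in_trans[OF that, of z] connected_in_trans[OF connected_in_sym[OF that], of z]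
      by blast
    then show ?thesis
      unfolding rep_def by simp
  qed
  have "component_reps T G (rep ` T)"
    unfolding component_reps_def
  proof (intro conjI ballI impI)
    show "rep ` T \<subseteq> T"
      using rep by auto
  next
    fix a b
    assume "a \<in> rep ` T" "b \<in> rep ` T" "a \<noteq> b"
    then obtain x y where xy: "x \<in> T" "y \<in> T" "a = rep x" "b = rep y" "rep x \<noteq> rep y"
      by blast
    show "\<not> connected_in G a b"
    proof
      assume ab: "connected_in G a b"
      have xa: "connected_in G x a" and yb: "connected_in G y b"
        using rep xy(1-4) by simp_all
      have "connected_in G x y"
        using connected_in_trans[OF connected_in_trans[OF xa ab] connected_in_sym[OF yb]] .
      then show False
        using rep_eq xy(5) by blast
    qed
  next
    fix x
    assume "x \<in> T"
    then show "\<exists>a\<in>rep ` T. connected_in G x a"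
      using rep by blast
  qed
  then show ?thesis
    by blast
qed

lemma component_reps_cover_after_delete:
  assumes cover: "\<forall>x\<in>T. \<exists>a\<in>R. connected_in (insert {p, q} G) x a"
    and r: "r \<in> R" "connected_in G p r" and x: "x \<in> T"
  shows "\<exists>a\<in>insert q R. connected_in G x a"
proof -
  obtain a where a: "a \<in> R" "connected_in (insert {p, q} G) x a"
    using cover x by blast
  then consider "connected_in G x a" | "connected_in G x p" | "connected_in G x q"
    using connected_in_insert_edge[OF a(2)] by blast
  then show ?thesis
  proof cases
    case 1
    then show ?thesis using a(1) by blast
  next
    case 2
    then show ?thesis using connected_in_trans[OF _ r(2)] r(1) by blast
  next
    case 3
    then show ?thesis by blast
  qed
qed

lemma component_reps_split:
  assumes reps: "component_reps T (insert {p, q} G) R"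
    and r: "r \<in> R" "connected_in G p r"
    and q: "q \<in> T" "\<not> connected_in G p q"
  shows "component_reps T G (insert q R) \<and> q \<notin> R"
proof -
  let ?G = "insert {p, q} G"
  have RT: "R \<subseteq> T"
    and apart: "\<And>a b. a \<in> R \<Longrightarrow> b \<in> R \<Longrightarrow> a \<noteq> b \<Longrightarrow> \<not> connected_in ?G a b"
    and cover: "\<forall>x\<in>T. \<exists>a\<in>R. connected_in ?G x a"
    using reps unfolding component_reps_def by auto
  have lift: "connected_in ?G x y" if "connected_in G x y" for x y
    using connected_in_mono[OF _ that] by blast
  have "connected_in ?G q p"
    by (rule connected_in_edge) (simp add: insert_commute)
  then have q_r: "connected_in ?G q r"
    using connected_in_trans[OF _ lift[OF r(2)]] by blast
  have not_q_r: "\<not> connected_in G q r"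
  proof
    assume "connected_in G q r"
    then have "connected_in G p q"
      by (rule connected_in_trans[OF r(2) connected_in_sym])
    then show False
      using q(2) by contradiction
  qed
  have q_notin: "q \<notin> R"
  proof
    assume "q \<in> R"
    moreover have "q \<noteq> r"
      using not_q_r by auto
    ultimately show False
      using apart r(1) q_r by blast
  qed
  have q_apart: "\<not> connected_in G s q" if "s \<in> R" for s
  proof
    assume s_q: "connected_in G s q"
    show False
    proof (cases "s = r")
      case True
      then show False
        using connected_in_sym[OF s_q] not_q_r by simp
    next
      case False
      then show False
        using apart[OF that r(1)] connected_in_trans[OF lift[OF s_q] q_r] by blast
    qed
  qed
  have "\<not> connected_in G a b" if "a \<in> insert q R" "b \<in> insert q R" "a \<noteq> b" for a b
    using that apart[of a b] lift[of a b] q_apart[of a] q_apart[of b] connected_in_sym[of G a b]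
    by auto
  then show ?thesis
    using RT q(1) q_notin component_reps_cover_after_delete[OF cover r]
    unfolding component_reps_def by auto
qed

lemma component_reps_delete_edge:
  assumes reps: "component_reps T (insert {u, v} G) R"
    and uv: "u \<in> T" "v \<in> T" "\<not> connected_in G u v" and fin_T: "finite T"
  shows "\<exists>R'. component_reps T G R' \<and> card R' = card R + 1"
proof -
  obtain r where r: "r \<in> R" "connected_in (insert {u, v} G) u r"
    using reps uv(1) unfolding component_reps_def by blast
  have r_side: "connected_in G r u \<or> connected_in G r v"
    using connected_in_insert_edge[OF connected_in_sym[OF r(2)]] by blast
  obtain p q where pq: "{p, q} = {u, v}" "connected_in G p r"
  proof (cases "connected_in G r u")
    case True
    then show thesis
      using that[OF refl connected_in_sym] by blast
  next
    case False
    then show thesis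
      using r_side that[OF insert_commute connected_in_sym] by blast
  qed
  have q: "q \<in> T" "\<not> connected_in G p q"
    using pq(1) uv connected_in_sym[of G v u] by (auto simp: doubleton_eq_iff)
  have split: "component_reps T G (insert q R)" "q \<notin> R"
    using component_reps_split[OF _ r(1) pq(2) q] reps pq(1) by auto
  have "finite R"
    using reps finite_subset[OF _ fin_T] unfolding component_reps_def by blast
  then show ?thesis
    using split by auto
qed

definition merging_edges :: "'a set \<Rightarrow> 'a set set \<Rightarrow> ('a set \<Rightarrow> real) \<Rightarrow> 'a set set \<Rightarrow> bool" where
  "merging_edges T C w A \<longleftrightarrow> (\<forall>e\<in>A. \<exists>u v. e = {u, v} \<and> u \<in> T \<and> v \<in> T \<and>
     \<not> connected_in (C \<union> {f\<in>A. w f < w e}) u v)"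

lemma merging_edges_subset:
  assumes "merging_edges T C w A" and "B \<subseteq> A"
  shows "merging_edges T C w B"
  unfolding merging_edges_def
proof
  fix e
  assume "e \<in> B"
  then obtain u v where uv: "e = {u, v}" "u \<in> T" "v \<in> T"
    "\<not> connected_in (C \<union> {f\<in>A. w f < w e}) u v"
    using assms unfolding merging_edges_def by blast
  have lighter: "C \<union> {f\<in>B. w f < w e} \<subseteq> C \<union> {f\<in>A. w f < w e}"
    using assms(2) by blast
  have "\<not> connected_in (C \<union> {f\<in>B. w f < w e}) u v"
    using uv(4) connected_in_mono[OF lighter] by blast
  then show "\<exists>u v. e = {u, v} \<and> u \<in> T \<and> v \<in> T \<and>
               \<not> connected_in (C \<union> {f\<in>B. w f < w e}) u v"
    using uv(1-3) by blast
qed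

text \<open>The edges are deleted from the heaviest down.\<close>
lemma component_reps_grow:
  fixes w :: "'a set \<Rightarrow> real"
  assumes "finite A" and fin_T: "finite T" and "inj_on w A"
    and "merging_edges T C w A" and "component_reps T (C \<union> A) R"
  shows "\<exists>R'. component_reps T C R' \<and> card R' = card R + card A"
  using assms(1,3-5)
proof (induction A arbitrary: R rule: finite_ranking_induct[where f = w])
  case empty
  then show ?case by auto
next
  case (insert e A)
  show ?case
  proof (cases "e \<in> A")
    case True
    then show ?thesis using insert by (simp add: insert_absorb)
  next
    case e_new: False
    obtain u v where uv: "e = {u, v}" "u \<in> T" "v \<in> T"
      and uv_apart: "\<not> connected_in (C \<union> {f\<in>insert e A. w f < w e}) u v"
      using insert.prems(2) unfolding merging_edges_def by blast
    have "w f < w e" if "f \<in> A" for f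
      using insert.hyps(2)[OF that] inj_on_contraD[OF insert.prems(1), of f e] that e_new
      by fastforce
    then have lighter: "C \<union> A \<subseteq> C \<union> {f\<in>insert e A. w f < w e}"
      by blast
    have "component_reps T (insert {u, v} (C \<union> A)) R"
      using insert.prems(3) uv(1) by (simp add: Un_insert_right)
    moreover have "\<not> connected_in (C \<union> A) u v"
      using uv_apart connected_in_mono[OF lighter] by blast
    ultimately obtain R1 where R1: "component_reps T (C \<union> A) R1" "card R1 = card R + 1"
      using component_reps_delete_edge[OF _ uv(2,3) _ fin_T] by blast
    have "merging_edges T C w A"
      using insert.prems(2) by (rule merging_edges_subset) blast
    moreover have "inj_on w A"
      using insert.prems(1) by (rule inj_on_subset) blast
    ultimately obtain R' where "component_reps T C R'" "card R' = card R1 + card A"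
      using insert.IH R1(1) by blast
    then show ?thesis
      using R1(2) e_new insert.hyps(1) by auto
  qed
qed

section \<open>The Kruskal forest\<close>

text \<open>The edges that are not bridged by strictly lighter edges; for injective weights this is
  the forest built by Kruskal's algorithm.\<close>
definition kruskal_forest :: "('a set \<Rightarrow> real) \<Rightarrow> 'a set set \<Rightarrow> 'a set set" where
  "kruskal_forest w E =
     {e\<in>E. \<forall>u v. e = {u, v} \<longrightarrow> \<not> connected_in {f\<in>E. w f < w e} u v}"

lemma kruskal_forest_subset: "kruskal_forest w E \<subseteq> E"
  unfolding kruskal_forest_def by blast

lemma kruskal_forest_connects_edge:
  assumes "finite E" and "e \<in> E" and "e = {u, v}"
  shows "connected_in (kruskal_forest w E) u v"
  using assms(2,3)
proof (induction "card {f\<in>E. w f < w e}" arbitrary: e u v rule: less_induct)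
  case less
  let ?K = "kruskal_forest w E" and ?L = "{f\<in>E. w f < w e}"
  show ?case
  proof (cases "e \<in> ?K")
    case True
    then show ?thesis
      using less.prems(2) connected_in_edge[of u v ?K] by simp
  next
    case False
    then have "\<not> (\<forall>u v. e = {u, v} \<longrightarrow> \<not> connected_in ?L u v)"
      using less.prems(1) unfolding kruskal_forest_def by simp
    then obtain a b where ab: "e = {a, b}" "connected_in ?L a b"
      by blast
    have lighter_conn: "connected_in ?K x y" if xy: "{x, y} \<in> ?L" for x y
    proof (rule less.hyps)
      have "{f\<in>E. w f < w {x, y}} \<subseteq> ?L" "{x, y} \<in> ?L - {f\<in>E. w f < w {x, y}}"
        using xy by auto
      then have "{f\<in>E. w f < w {x, y}} \<subset> ?L"
        by blast
      then show "card {f\<in>E. w f < w {x, y}} < card ?L"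
        using assms(1) by (intro psubset_card_mono) auto
    qed (use xy in auto)
    have K_ab: "connected_in ?K a b"
      using connected_in_subst[OF lighter_conn ab(2)] .
    have "(u = a \<and> v = b) \<or> (u = b \<and> v = a)"
      using ab(1) less.prems(2) by (auto simp: doubleton_eq_iff)
    then show ?thesis
      using K_ab connected_in_sym[OF K_ab] by blast
  qed
qed

definition cycle_edges :: "'a list \<Rightarrow> 'a set set" where
  "cycle_edges cs = {{cs ! i, cs ! (i + 1)} | i. i < length cs - 1} \<union> {{last cs, hd cs}}"

lemma walk_connected:
  "(\<And>t. i \<le> t \<Longrightarrow> t < k \<Longrightarrow> {cs ! t, cs ! (t + 1)} \<in> E) \<Longrightarrow> i \<le> k \<Longrightarrow>
     connected_in E (cs ! i) (cs ! k)"
proof (induction k)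
  case 0
  then show ?case by simp
next
  case (Suc k)
  show ?case
  proof (cases "i = Suc k")
    case False
    then have "connected_in E (cs ! i) (cs ! k)"
      using Suc by simp
    moreover have "connected_in E (cs ! k) (cs ! Suc k)"
      using Suc.prems(1)[of k] Suc.prems(2) False connected_in_edge by simp
    ultimately show ?thesis
      by (rule connected_in_trans)
  qed simp
qed

lemma distinct_nth_doubleton_neq:
  assumes "distinct cs" and "i < length cs" "k < length cs" "j < length cs" "l < length cs"
    and "\<not> ((i = j \<and> k = l) \<or> (i = l \<and> k = j))"
  shows "{cs ! i, cs ! k} \<noteq> {cs ! j, cs ! l}"
  using assms nth_eq_iff_index_eq by (auto simp: doubleton_eq_iff)

lemma cycle_edge_redundant:
  assumes dist: "distinct cs" and len: "3 \<le> length cs" and e: "e \<in> cycle_edges cs"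
  shows "\<exists>a b. e = {a, b} \<and> connected_in (cycle_edges cs - {e}) a b"
proof -
  define m where "m = length cs"
  define D where "D = cycle_edges cs - {e}"
  have nonempty: "cs \<noteq> []"
    using len by auto
  then have ends: "hd cs = cs ! 0" "last cs = cs ! (m - 1)"
    unfolding m_def by (simp_all add: hd_conv_nth last_conv_nth)
  have m3: "3 \<le> m"
    using len unfolding m_def .
  note same_edge = distinct_nth_doubleton_neq[OF dist, folded m_def]
  have path_in_D: "{cs ! t, cs ! (t + 1)} \<in> D"
    if "t < m - 1" "{cs ! t, cs ! (t + 1)} \<noteq> e" for t
    using that unfolding D_def cycle_edges_def m_def by blast
  have closing_in_D: "{cs ! (m - 1), cs ! 0} \<in> D" if "{cs ! (m - 1), cs ! 0} \<noteq> e"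
    using that ends unfolding D_def cycle_edges_def by auto
  from e consider "e = {cs ! (m - 1), cs ! 0}"
    | j where "j < m - 1" "e = {cs ! j, cs ! (j + 1)}"
    using ends unfolding cycle_edges_def m_def by auto
  then show ?thesis
  proof cases
    case 1
    have "{cs ! t, cs ! (t + 1)} \<noteq> e" if "t < m - 1" for t
      unfolding 1 using that m3 by (intro same_edge) auto
    then have walk: "connected_in D (cs ! 0) (cs ! (m - 1))"
      using path_in_D by (intro walk_connected) auto
    show ?thesis
      unfolding D_def[symmetric] using 1 connected_in_sym[OF walk]
      by (intro exI[of _ "cs ! (m - 1)"] exI[of _ "cs ! 0"]) simp
  next
    case (2 j)
    have other: "{cs ! t, cs ! (t + 1)} \<noteq> e" if "t < m - 1" "t \<noteq> j" for t
      unfolding 2(2) using that 2(1) by (intro same_edge) auto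
    have "{cs ! (m - 1), cs ! 0} \<noteq> e"
      unfolding 2(2) using 2(1) m3 by (intro same_edge) auto
    then have closing: "connected_in D (cs ! (m - 1)) (cs ! 0)"
      by (intro connected_in_edge closing_in_D)
    have after_j: "connected_in D (cs ! (j + 1)) (cs ! (m - 1))"
      using 2(1) other path_in_D by (intro walk_connected) auto
    have before_j: "connected_in D (cs ! 0) (cs ! j)"
      using 2(1) other path_in_D by (intro walk_connected) auto
    have "connected_in D (cs ! j) (cs ! (j + 1))"
      using connected_in_sym[OF connected_in_trans[OF connected_in_trans[OF after_j closing] before_j]] .
    then show ?thesis
      unfolding D_def[symmetric] using 2(2) by (intro exI[of _ "cs ! j"] exI[of _ "cs ! (j + 1)"]) simp
  qed
qed

lemma cycle_edges_subset: "is_cycle E cs \<Longrightarrow> cycle_edges cs \<subseteq> E"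
  unfolding is_cycle_def cycle_edges_def by auto

text \<open>With injective weights the heaviest edge of a cycle in the Kruskal forest would be bridged
  by lighter edges, which is impossible.\<close>
lemma kruskal_forest_acyclic:
  assumes inj: "inj_on w E"
  shows "forest (kruskal_forest w E)"
  unfolding forest_def
proof
  let ?K = "kruskal_forest w E"
  assume "\<exists>cs. is_cycle ?K cs"
  then obtain cs where cyc: "is_cycle ?K cs"
    by blast
  define CE where "CE = cycle_edges cs"
  have CE_K: "CE \<subseteq> ?K"
    using cycle_edges_subset[OF cyc] unfolding CE_def .
  then have CE_E: "CE \<subseteq> E"
    using kruskal_forest_subset by blast
  have "finite CE" "CE \<noteq> {}"
    unfolding CE_def cycle_edges_def by auto
  then have "Max (w ` CE) \<in> w ` CE"
    by (intro Max_in) auto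
  then obtain e where e: "e \<in> CE" "w e = Max (w ` CE)"
    by (metis imageE)
  have "w f < w e" if "f \<in> CE - {e}" for f
  proof -
    have "w f \<le> w e"
      using that e(2) \<open>finite CE\<close> by simp
    moreover have "w f \<noteq> w e"
      using that e(1) CE_E inj_on_contraD[OF inj] by blast
    ultimately show ?thesis
      by simp
  qed
  then have lighter: "CE - {e} \<subseteq> {f\<in>E. w f < w e}"
    using CE_E by blast
  have "distinct cs" "3 \<le> length cs"
    using cyc unfolding is_cycle_def by auto
  then obtain a b where ab: "e = {a, b}" "connected_in (CE - {e}) a b"
    using cycle_edge_redundant e(1) unfolding CE_def by blast
  have "connected_in {f\<in>E. w f < w e} a b"
    using connected_in_mono[OF lighter ab(2)] .
  moreover have "e \<in> ?K"
    using e(1) CE_K by blast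
  ultimately show False
    using ab(1) unfolding kruskal_forest_def by blast
qed

lemma kruskal_forest_spanning:
  assumes "finite E" and "inj_on w E"
  shows "spanning_forest V E (kruskal_forest w E)"
  unfolding spanning_forest_def
proof (intro conjI ballI)
  show "kruskal_forest w E \<subseteq> E"
    by (rule kruskal_forest_subset)
  show "forest (kruskal_forest w E)"
    using assms(2) by (rule kruskal_forest_acyclic)
next
  fix x y
  show "connected_in (kruskal_forest w E) x y \<longleftrightarrow> connected_in E x y"
  proof
    assume "connected_in (kruskal_forest w E) x y"
    then show "connected_in E x y"
      by (rule connected_in_mono[OF kruskal_forest_subset])
  next
    assume xy: "connected_in E x y"
    have edges: "connected_in (kruskal_forest w E) a b" if "{a, b} \<in> E" for a b
      using kruskal_forest_connects_edge[OF assms(1) that refl] .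
    show "connected_in (kruskal_forest w E) x y"
      using connected_in_subst[OF edges xy] .
  qed
qed

section \<open>Weights of paths\<close>

lemma path_weight_Nil [simp]: "path_weight d [] = 0"
  by (simp add: path_weight_def)

lemma path_weight_single [simp]: "path_weight d [a] = 0"
  by (simp add: path_weight_def)

lemma path_weight_Cons_Cons [simp]:
  "path_weight d (a # b # qs) = d a b + path_weight d (b # qs)"
  by (simp add: path_weight_def)

definition separated :: "('a \<Rightarrow> 'a \<Rightarrow> real) \<Rightarrow> real \<Rightarrow> 'a set \<Rightarrow> bool" where
  "separated d t R \<longleftrightarrow> (\<forall>x\<in>R. \<forall>y\<in>R. x \<noteq> y \<longrightarrow> t \<le> d x y)"

lemma separated_list_weight:
  "distinct xs \<Longrightarrow> separated d t (set xs) \<Longrightarrow> real (length xs - 1) * t \<le> path_weight d xs"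
proof (induction xs rule: induct_list012)
  case (3 x y zs)
  have "t \<le> d x y"
    using "3.prems" unfolding separated_def by simp
  moreover have "separated d t (set (y # zs))"
    using "3.prems"(2) unfolding separated_def by simp
  then have "real (length (y # zs) - 1) * t \<le> path_weight d (y # zs)"
    using "3.prems"(1) "3.IH"(2) by simp
  ultimately show ?case
    by (simp add: algebra_simps)
qed simp_all

locale finite_metric_on =
  fixes V :: "'a set" and d :: "'a \<Rightarrow> 'a \<Rightarrow> real"
  assumes metric: "finite_metric V d"
begin

lemma finite_V: "finite V"
  using metric unfolding finite_metric_def by blast

lemma dist_sym: "u \<in> V \<Longrightarrow> v \<in> V \<Longrightarrow> d u v = d v u"
  using metric unfolding finite_metric_def by blast

lemma dist_pos: "u \<in> V \<Longrightarrow> v \<in> V \<Longrightarrow> u \<noteq> v \<Longrightarrow> d u v > 0"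
  using metric unfolding finite_metric_def by (metis less_eq_real_def)

lemma dist_nonneg: "u \<in> V \<Longrightarrow> v \<in> V \<Longrightarrow> d u v \<ge> 0"
  using metric unfolding finite_metric_def by blast

lemma triangle: "u \<in> V \<Longrightarrow> v \<in> V \<Longrightarrow> x \<in> V \<Longrightarrow> d u x \<le> d u v + d v x"
  using metric unfolding finite_metric_def by blast

lemma path_weight_nonneg: "set ps \<subseteq> V \<Longrightarrow> path_weight d ps \<ge> 0"
  by (induction ps rule: induct_list012) (auto intro: add_nonneg_nonneg dist_nonneg)

lemma path_weight_Cons_ge:
  assumes "a \<in> V" and "set qs \<subseteq> V"
  shows "path_weight d qs \<le> path_weight d (a # qs)"
  using assms dist_nonneg by (cases qs) auto

lemma path_weight_skip:
  assumes "a \<in> V" and "b \<in> V" and "set qs \<subseteq> V"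
  shows "path_weight d (a # qs) \<le> path_weight d (a # b # qs)"
proof (cases qs)
  case Nil
  then show ?thesis
    using assms dist_nonneg by simp
next
  case (Cons c qs')
  then show ?thesis
    using assms triangle[of a b c] by simp
qed

lemma path_weight_filter_tail:
  "a \<in> V \<Longrightarrow> set qs \<subseteq> V \<Longrightarrow> path_weight d (a # filter P qs) \<le> path_weight d (a # qs)"
proof (induction qs arbitrary: a)
  case (Cons c qs)
  show ?case
  proof (cases "P c")
    case True
    then show ?thesis
      using Cons.IH[of c] Cons.prems by simp
  next
    case False
    then have "path_weight d (a # filter P (c # qs)) \<le> path_weight d (a # qs)"
      using Cons.IH[of a] Cons.prems by simp
    also have "\<dots> \<le> path_weight d (a # c # qs)"
      using Cons.prems by (intro path_weight_skip) auto
    finally show ?thesis .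
  qed
qed simp

lemma path_weight_filter: "set ps \<subseteq> V \<Longrightarrow> path_weight d (filter P ps) \<le> path_weight d ps"
proof (induction ps)
  case (Cons a qs)
  show ?case
  proof (cases "P a")
    case True
    then show ?thesis
      using path_weight_filter_tail[of a qs P] Cons.prems by simp
  next
    case False
    then have "path_weight d (filter P (a # qs)) \<le> path_weight d qs"
      using Cons by simp
    also have "\<dots> \<le> path_weight d (a # qs)"
      using Cons.prems by (intro path_weight_Cons_ge) auto
    finally show ?thesis .
  qed
qed simp

lemma separated_subset_path_weight:
  assumes "distinct ps" and "set ps \<subseteq> V" and "R \<subseteq> set ps" and "separated d t R"
  shows "real (card R - 1) * t \<le> path_weight d ps"
proof -
  let ?xs = "filter (\<lambda>x. x \<in> R) ps"
  have "set ?xs = R" "distinct ?xs"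
    using assms(1,3) by auto
  then have "length ?xs = card R"
    using distinct_card by metis
  then have "real (card R - 1) * t \<le> path_weight d ?xs"
    using separated_list_weight[of ?xs d t] \<open>set ?xs = R\<close> \<open>distinct ?xs\<close> assms(4) by simp
  also have "\<dots> \<le> path_weight d ps"
    using assms(2) by (rule path_weight_filter)
  finally show ?thesis .
qed

end

section \<open>The symmetric disk graph\<close>

locale sdg_setting = finite_metric_on V d for V :: "'a set" and d :: "'a \<Rightarrow> 'a \<Rightarrow> real" +
  fixes r :: "'a \<Rightarrow> real"
  assumes distinct_dist: "distinct_distances V d"
begin

abbreviation S :: "'a set set" where "S \<equiv> SDG V d r"
abbreviation w :: "'a set \<Rightarrow> real" where "w \<equiv> edge_weight d"
abbreviation K :: "'a set set" where "K \<equiv> kruskal_forest w S"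

lemma edge_weight_eq: "u \<in> V \<Longrightarrow> v \<in> V \<Longrightarrow> w {u, v} = d u v"
  unfolding edge_weight_def
proof (rule the_equality)
  fix x
  assume "u \<in> V" "v \<in> V" and "\<exists>a b. {u, v} = {a, b} \<and> x = d a b"
  then show "x = d u v"
    using dist_sym by (auto simp: doubleton_eq_iff)
qed blast

lemma SDG_edgeE:
  assumes "e \<in> S"
  obtains u v where "e = {u, v}" "u \<in> V" "v \<in> V" "u \<noteq> v" "d u v \<le> r u" "d u v \<le> r v"
  using assms unfolding SDG_def by blast

lemma finite_SDG: "finite S"
proof (rule finite_subset)
  show "S \<subseteq> (\<lambda>(u, v). {u, v}) ` (V \<times> V)"
    unfolding SDG_def by auto
  show "finite ((\<lambda>(u, v). {u, v}) ` (V \<times> V))"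
    using finite_V by simp
qed

lemma inj_on_weight: "inj_on w S"
proof (rule inj_onI)
  fix e f
  assume "e \<in> S" "f \<in> S" "w e = w f"
  then obtain a b x y where "e = {a, b}" "f = {x, y}" "a \<in> V" "b \<in> V" "x \<in> V" "y \<in> V"
    "a \<noteq> b" "x \<noteq> y" "d a b = d x y"
    using edge_weight_eq by (metis SDG_edgeE)
  then show "e = f"
    using distinct_dist unfolding distinct_distances_def by blast
qed

lemma weight_pos: "e \<in> S \<Longrightarrow> w e > 0"
  using edge_weight_eq dist_pos by (metis SDG_edgeE)

definition tall :: "real \<Rightarrow> 'a set" where
  "tall t = {x\<in>V. t \<le> r x}"

definition short_edges :: "real \<Rightarrow> 'a set set" where
  "short_edges t = {{a, b} | a b. a \<in> tall t \<and> b \<in> tall t \<and> a \<noteq> b \<and> d a b < t}"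

definition heavy_edges :: "real \<Rightarrow> 'a set set" where
  "heavy_edges t = {e\<in>K. t \<le> w e}"

lemma SDG_memI:
  "u \<in> V \<Longrightarrow> v \<in> V \<Longrightarrow> u \<noteq> v \<Longrightarrow> d u v \<le> r u \<Longrightarrow> d u v \<le> r v \<Longrightarrow> {u, v} \<in> S"
  unfolding SDG_def by blast

lemma short_edge_light:
  assumes "f \<in> short_edges t"
  shows "f \<in> S \<and> w f < t"
proof -
  obtain a b where ab: "f = {a, b}" "a \<in> tall t" "b \<in> tall t" "a \<noteq> b" "d a b < t"
    using assms unfolding short_edges_def by blast
  then have "a \<in> V" "b \<in> V" "t \<le> r a" "t \<le> r b"
    unfolding tall_def by auto
  then have "{a, b} \<in> S"
    using ab(4,5) by (intro SDG_memI) auto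
  moreover have "w {a, b} < t"
    using ab(5) edge_weight_eq \<open>a \<in> V\<close> \<open>b \<in> V\<close> by simp
  ultimately show ?thesis
    using ab(1) by simp
qed

lemma heavy_edge_apart:
  assumes e: "e \<in> heavy_edges t"
  shows "\<exists>u v. e = {u, v} \<and> u \<in> tall t \<and> v \<in> tall t \<and>
           \<not> connected_in (short_edges t \<union> {f\<in>heavy_edges t. w f < w e}) u v"
proof -
  have e_K: "e \<in> K" and heavy: "t \<le> w e"
    using e unfolding heavy_edges_def by auto
  then have "e \<in> S"
    using kruskal_forest_subset by blast
  then obtain u v where uv: "e = {u, v}" "u \<in> V" "v \<in> V" "d u v \<le> r u" "d u v \<le> r v"
    by (rule SDG_edgeE)
  have "t \<le> d u v"
    using heavy uv(1-3) edge_weight_eq by simp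
  then have tall_uv: "u \<in> tall t" "v \<in> tall t"
    using uv(2-5) unfolding tall_def by auto
  have lighter: "short_edges t \<union> {f\<in>heavy_edges t. w f < w e} \<subseteq> {f\<in>S. w f < w e}"
  proof
    fix f
    assume "f \<in> short_edges t \<union> {f\<in>heavy_edges t. w f < w e}"
    then show "f \<in> {f\<in>S. w f < w e}"
    proof
      assume "f \<in> short_edges t"
      then show ?thesis
        using short_edge_light heavy by fastforce
    next
      assume "f \<in> {f\<in>heavy_edges t. w f < w e}"
      then show ?thesis
        using kruskal_forest_subset unfolding heavy_edges_def by blast
    qed
  qed
  have "\<not> connected_in {f\<in>S. w f < w e} u v"
    using e_K uv(1) unfolding kruskal_forest_def by blast
  then have "\<not> connected_in (short_edges t \<union> {f\<in>heavy_edges t. w f < w e}) u v"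
    using connected_in_mono[OF lighter] by blast
  then show ?thesis
    using uv(1) tall_uv by blast
qed

text \<open>Representatives of the components of the short-edge graph are \<open>t\<close>-separated: two of
  them at distance \<open>< t\<close> would be joined by a short edge.\<close>
lemma short_edge_reps_separated:
  assumes R: "component_reps (tall t) (short_edges t) R"
  shows "R \<subseteq> V \<and> separated d t R"
proof -
  have "t \<le> d a b" if ab: "a \<in> R" "b \<in> R" "a \<noteq> b" for a b
  proof (rule ccontr)
    assume "\<not> t \<le> d a b"
    moreover have "a \<in> tall t" "b \<in> tall t"
      using ab R unfolding component_reps_def by auto
    ultimately have "{a, b} \<in> short_edges t"
      using ab(3) unfolding short_edges_def by (intro CollectI exI conjI refl) auto
    then have "connected_in (short_edges t) a b"
      by (rule connected_in_edge)
    then show False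
      using R ab unfolding component_reps_def by blast
  qed
  moreover have "R \<subseteq> V"
    using R unfolding component_reps_def tall_def by blast
  ultimately show ?thesis
    unfolding separated_def by blast
qed

lemma heavy_edges_separated_set:
  assumes nonempty: "heavy_edges t \<noteq> {}"
  shows "\<exists>R\<subseteq>V. card (heavy_edges t) + 1 \<le> card R \<and> separated d t R"
proof -
  let ?T = "tall t" and ?C = "short_edges t" and ?A = "heavy_edges t"
  have A_S: "?A \<subseteq> S"
    unfolding heavy_edges_def using kruskal_forest_subset by blast
  have finite_T: "finite ?T"
    unfolding tall_def using finite_V by simp
  obtain e where "e \<in> ?A"
    using nonempty by blast
  from heavy_edge_apart[OF this] have "?T \<noteq> {}"
    by (elim exE conjE) blast
  then obtain R0 where R0: "component_reps ?T (?C \<union> ?A) R0" "R0 \<noteq> {}"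
    using component_reps_exist[of ?T "?C \<union> ?A"] by blast
  have "merging_edges ?T ?C w ?A"
    unfolding merging_edges_def by (intro ballI heavy_edge_apart)
  then obtain R where R: "component_reps ?T ?C R" "card R = card R0 + card ?A"
    using component_reps_grow[OF finite_subset[OF A_S finite_SDG] finite_T
        inj_on_subset[OF inj_on_weight A_S] _ R0(1)] by blast
  have "finite R0"
    using R0(1) finite_subset[OF _ finite_T] unfolding component_reps_def by blast
  then have "card ?A + 1 \<le> card R"
    using R(2) R0(2) by (simp add: Suc_leI card_gt_0_iff)
  then show ?thesis
    using short_edge_reps_separated[OF R(1)] by blast
qed

lemma heavy_edges_layer_bound:
  assumes H: "ham_path V H" and t: "t > 0"
  shows "real (card (heavy_edges t)) * t \<le> path_weight d H"
proof (cases "heavy_edges t = {}")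
  case True
  then show ?thesis
    using H path_weight_nonneg unfolding ham_path_def by simp
next
  case False
  then obtain R where R: "R \<subseteq> V" "card (heavy_edges t) + 1 \<le> card R" "separated d t R"
    using heavy_edges_separated_set by blast
  have "real (card (heavy_edges t)) * t \<le> real (card R - 1) * t"
    using R(2) t by (intro mult_right_mono) auto
  also have "\<dots> \<le> path_weight d H"
    using H R(1,3) unfolding ham_path_def by (intro separated_subset_path_weight) auto
  finally show ?thesis .
qed

lemma kruskal_weight_le_harm:
  assumes "ham_path V H"
  shows "graph_weight d K \<le> path_weight d H * harm (card K)"
  unfolding graph_weight_def
proof (rule sum_le_harm_if_layers_bounded)
  show "finite K"
    using finite_subset[OF kruskal_forest_subset finite_SDG] .
  show "\<forall>e\<in>K. w e > 0"
    using weight_pos kruskal_forest_subset by blast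
  show "layers_bounded (path_weight d H) w K"
    using heavy_edges_layer_bound[OF assms] unfolding layers_bounded_def heavy_edges_def by blast
qed

text \<open>A forest on \<open>n\<close> points has fewer than \<open>n\<close> edges; here this follows from the separated
  set at the smallest edge weight.\<close>
lemma harm_card_kruskal_le_log: "harm (card K) \<le> log (5/4) (real (card V))"
proof (cases "K = {}")
  case True
  have "0 \<le> log (5/4) (real (card V))"
  proof (cases "card V = 0")
    case True
    then show ?thesis by (simp add: log_def)
  next
    case False
    then show ?thesis by simp
  qed
  then show ?thesis
    using True by (simp add: harm_def)
next
  case False
  have "finite K"
    using finite_subset[OF kruskal_forest_subset finite_SDG] .
  define t where "t = Min (w ` K)"
  have heavy_K: "heavy_edges t = K"
    unfolding heavy_edges_def t_def using \<open>finite K\<close> by auto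
  then have "heavy_edges t \<noteq> {}"
    using False by simp
  then obtain R where R: "R \<subseteq> V" "card K + 1 \<le> card R"
    using heavy_edges_separated_set heavy_K by metis
  then have "card K + 1 \<le> card V"
    using card_mono[OF finite_V R(1)] by linarith
  then have "log (5/4) (real (card K) + 1) \<le> log (5/4) (real (card V))"
    by simp
  then show ?thesis
    using harm_le_log[of "card K"] by linarith
qed

end

theorem lemma2:
  fixes V :: "'a set" and d :: "'a \<Rightarrow> 'a \<Rightarrow> real" and r :: "'a \<Rightarrow> real"
    and n :: nat and F :: "'a set set" and H :: "'a list"
  assumes "finite_metric V d"
    and "card V = n"
    and "distinct_distances V d"
    and "\<forall>v\<in>V. r v > 0"
    and "min_spanning_forest V d (SDG V d r) F"
    and "min_ham_path V d H"
  shows "graph_weight d F \<le> log (5/4) (real n) * path_weight d H"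
proof -
  interpret sdg_setting V d r
    using assms(1,3) by unfold_locales
  have H: "ham_path V H"
    using assms(6) unfolding min_ham_path_def by blast
  have W_nonneg: "path_weight d H \<ge> 0"
    using H path_weight_nonneg unfolding ham_path_def by simp
  have "graph_weight d F \<le> graph_weight d K"
    using assms(5) kruskal_forest_spanning[OF finite_SDG inj_on_weight]
    unfolding min_spanning_forest_def by blast
  also have "\<dots> \<le> path_weight d H * harm (card K)"
    using H by (rule kruskal_weight_le_harm)
  also have "\<dots> \<le> path_weight d H * log (5/4) (real n)"
    using W_nonneg harm_card_kruskal_le_log assms(2) by (intro mult_left_mono) auto
  finally show ?thesis
    by (simp add: mult.commute)
qed

end
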